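(* Let $\tau$ be a continuous distributive triangle function on $\Delta^+$, $\Sigma$ a $\sigma$-ring of subsets of $\Omega\ne\emptyset$, and $\gamma^1,\gamma^2$ $\tau$-decomposable measures on $\Sigma$ continuous from below. If a measurable $f:\Omega\to[0,+\infty]$ is $\gamma^i$-integrable on $E\in\Sigma$ for $i=1,2$, then $f$ is $(\gamma^1\oplus_\tau\gamma^2)$-integrable on $E$ and $$\int_E f\,d(\gamma^1\oplus_\tau\gamma^2)=\int_E f\,d\gamma^1\ \oplus_\tau\ \int_E f\,d\gamma^2,$$ where $(\gamma^1\oplus_\tau\gamma^2)_F:=\tau(\gamma^1_F,\gamma^2_F)$ for $F\in\Sigma$.
   Context: $\Delta^+$: functions $F:[-\infty,+\infty]\to[0,1]$ non-decreasing, left-continuous on $\mathbb{R}$, $F(x)=0$ for $x\le0$, $F(+\infty)=1$, ordered pointwise; $\varepsilon_a(x)=1$ if $x>a$, else $0$. Triangle function: symmetric, associative $\tau:\Delta^+\times\Delta^+\to\Delta^+$, non-decreasing in each variable, identity $\varepsilon_0$; $G\oplus_\tau H=\tau(G,H)$, $\bigoplus_{k=1}^nG_k=\tau(G_1,\bigoplus_{k=2}^nG_k)$. $c\odot G=\varepsilon_0$ if $c=0$, $(c\odot G)(x)=G(x/c)$ if $c>0$; $\tau$ distributive if $c\odot(G\oplus H)=(c\odot G)\oplus(c\odot H)$ for all $c\ge0$. Convergence in $\Delta^+$ is weak convergence; $\tau$ continuous if continuous for it. $\tau$-decomposable measure on a ring $\Sigma$: $\gamma:\Sigma\to\Delta^+$,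 $\gamma_\emptyset=\varepsilon_0$, $\gamma_{E\cup F}=\tau(\gamma_E,\gamma_F)$ for disjoint $E,F$; continuous from below: $\gamma_{E_n}\to\gamma_E$ whenever $E_n\subseteq E_{n+1}$, $\bigcup E_n=E$ in $\Sigma$. Simple function $\sum_{i=1}^nx_i\chi_{E_i}$ ($x_i\in[0,\infty)$, $E_i\in\Sigma$ pairwise disjoint), $\int_Ef\,d\gamma=\bigoplus_ix_i\odot\gamma_{E\cap E_i}$. Measurable: pointwise limit of simple functions. $\mathcal S_{f,E}$: simple $\mathfrak f\le f$ on $E$. $f$ is $\gamma$-integrable on $E$ if some $H\in\Delta^+$ satisfies $\int_E\mathfrak f\,d\gamma\ge H$ for all $\mathfrak f\in\mathcal S_{f,E}$; then $\int_Ef\,d\gamma=\inf\{\int_E\mathfrak f\,d\gamma:\mathfrak f\in\mathcal S_{f,E}\}$ in $(\Delta^+,\le)$. *)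

theory Defs
  imports "HOL-Analysis.Analysis"
begin

type_synonym dfun = "ereal \<Rightarrow> real"

definition Dplus :: "dfun set" where
  "Dplus = {F. (\<forall>x. 0 \<le> F x \<and> F x \<le> 1) \<and> mono F
     \<and> (\<forall>x::real. ((\<lambda>y. F (ereal y)) \<longlongrightarrow> F (ereal x)) (at_left x))
     \<and> (\<forall>x. x \<le> 0 \<longrightarrow> F x = 0) \<and> F \<infinity> = 1}"

definition eps :: "real \<Rightarrow> dfun" where
  "eps a = (\<lambda>x. if x > ereal a then 1 else 0)"

definition dle :: "dfun \<Rightarrow> dfun \<Rightarrow> bool" where
  "dle F G \<longleftrightarrow> (\<forall>x. F x \<le> G x)"

definition weak_conv :: "(nat \<Rightarrow> dfun) \<Rightarrow> dfun \<Rightarrow> bool" where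
  "weak_conv Fs F \<longleftrightarrow>
     (\<forall>x::real. isCont (\<lambda>y. F (ereal y)) x \<longrightarrow> (\<lambda>n. Fs n (ereal x)) \<longlonglongrightarrow> F (ereal x))"

definition triangle_function :: "(dfun \<Rightarrow> dfun \<Rightarrow> dfun) \<Rightarrow> bool" where
  "triangle_function \<tau> \<longleftrightarrow>
     (\<forall>F\<in>Dplus. \<forall>G\<in>Dplus. \<tau> F G \<in> Dplus)
   \<and> (\<forall>F\<in>Dplus. \<forall>G\<in>Dplus. \<tau> F G = \<tau> G F)
   \<and> (\<forall>F\<in>Dplus. \<forall>G\<in>Dplus. \<forall>H\<in>Dplus. \<tau> F (\<tau> G H) = \<tau> (\<tau> F G) H)
   \<and> (\<forall>F\<in>Dplus. \<forall>G\<in>Dplus. \<forall>H\<in>Dplus. dle F G \<longrightarrow> dle (\<tau> F H) (\<tau> G H))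
   \<and> (\<forall>F\<in>Dplus. \<tau> F (eps 0) = F)"

definition tf_continuous :: "(dfun \<Rightarrow> dfun \<Rightarrow> dfun) \<Rightarrow> bool" where
  "tf_continuous \<tau> \<longleftrightarrow>
     (\<forall>Fs F Gs G. (\<forall>n. Fs n \<in> Dplus) \<and> F \<in> Dplus \<and> (\<forall>n. Gs n \<in> Dplus) \<and> G \<in> Dplus
        \<and> weak_conv Fs F \<and> weak_conv Gs G
        \<longrightarrow> weak_conv (\<lambda>n. \<tau> (Fs n) (Gs n)) (\<tau> F G))"

definition smult_d :: "real \<Rightarrow> dfun \<Rightarrow> dfun" where
  "smult_d c G = (if c = 0 then eps 0 else (\<lambda>x. G (x / ereal c)))"

definition tf_distributive :: "(dfun \<Rightarrow> dfun \<Rightarrow> dfun) \<Rightarrow> bool" where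
  "tf_distributive \<tau> \<longleftrightarrow>
     (\<forall>c\<ge>0. \<forall>G\<in>Dplus. \<forall>H\<in>Dplus. smult_d c (\<tau> G H) = \<tau> (smult_d c G) (smult_d c H))"

definition dsum :: "(dfun \<Rightarrow> dfun \<Rightarrow> dfun) \<Rightarrow> dfun list \<Rightarrow> dfun" where
  "dsum \<tau> Gs = foldr \<tau> Gs (eps 0)"

definition sigma_ring :: "'a set \<Rightarrow> 'a set set \<Rightarrow> bool" where
  "sigma_ring \<Omega> \<Sigma> \<longleftrightarrow> \<Sigma> \<subseteq> Pow \<Omega> \<and> {} \<in> \<Sigma>
     \<and> (\<forall>A\<in>\<Sigma>. \<forall>B\<in>\<Sigma>. A - B \<in> \<Sigma>)
     \<and> (\<forall>A::nat \<Rightarrow> 'a set. range A \<subseteq> \<Sigma> \<longrightarrow> \<Union>(range A) \<in> \<Sigma>)"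

definition decomposable :: "(dfun \<Rightarrow> dfun \<Rightarrow> dfun) \<Rightarrow> 'a set set \<Rightarrow> ('a set \<Rightarrow> dfun) \<Rightarrow> bool" where
  "decomposable \<tau> \<Sigma> \<gamma> \<longleftrightarrow> (\<forall>E\<in>\<Sigma>. \<gamma> E \<in> Dplus) \<and> \<gamma> {} = eps 0
     \<and> (\<forall>E\<in>\<Sigma>. \<forall>F\<in>\<Sigma>. E \<inter> F = {} \<longrightarrow> \<gamma> (E \<union> F) = \<tau> (\<gamma> E) (\<gamma> F))"

definition cont_below :: "'a set set \<Rightarrow> ('a set \<Rightarrow> dfun) \<Rightarrow> bool" where
  "cont_below \<Sigma> \<gamma> \<longleftrightarrow> (\<forall>A::nat \<Rightarrow> 'a set. (\<forall>n. A n \<in> \<Sigma>) \<and> incseq A \<and> \<Union>(range A) \<in> \<Sigma>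
       \<longrightarrow> weak_conv (\<lambda>n. \<gamma> (A n)) (\<gamma> (\<Union>(range A))))"

definition msum :: "(dfun \<Rightarrow> dfun \<Rightarrow> dfun) \<Rightarrow> ('a set \<Rightarrow> dfun) \<Rightarrow> ('a set \<Rightarrow> dfun) \<Rightarrow> ('a set \<Rightarrow> dfun)" where
  "msum \<tau> \<gamma>1 \<gamma>2 = (\<lambda>F. \<tau> (\<gamma>1 F) (\<gamma>2 F))"

text \<open>A simple function \<Sum> x_i \<chi>_{E_i} is represented by the list of pairs (x_i, E_i).\<close>
definition valid_simple :: "'a set set \<Rightarrow> (real \<times> 'a set) list \<Rightarrow> bool" where
  "valid_simple \<Sigma> s \<longleftrightarrow> (\<forall>(x, E)\<in>set s. 0 \<le> x \<and> E \<in> \<Sigma>)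
     \<and> (\<forall>i<length s. \<forall>j<length s. i \<noteq> j \<longrightarrow> snd (s ! i) \<inter> snd (s ! j) = {})"

definition simple_eval :: "(real \<times> 'a set) list \<Rightarrow> 'a \<Rightarrow> ennreal" where
  "simple_eval s \<omega> = sum_list (map (\<lambda>(x, E). if \<omega> \<in> E then ennreal x else 0) s)"

definition simple_int :: "(dfun \<Rightarrow> dfun \<Rightarrow> dfun) \<Rightarrow> ('a set \<Rightarrow> dfun) \<Rightarrow> (real \<times> 'a set) list \<Rightarrow> 'a set \<Rightarrow> dfun" where
  "simple_int \<tau> \<gamma> s E = dsum \<tau> (map (\<lambda>(x, Ei). smult_d x (\<gamma> (E \<inter> Ei))) s)"

definition measurable_fn :: "'a set \<Rightarrow> 'a set set \<Rightarrow> ('a \<Rightarrow> ennreal) \<Rightarrow> bool" where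
  "measurable_fn \<Omega> \<Sigma> f \<longleftrightarrow> (\<exists>s::nat \<Rightarrow> (real \<times> 'a set) list. (\<forall>n. valid_simple \<Sigma> (s n))
      \<and> (\<forall>\<omega>\<in>\<Omega>. (\<lambda>n. simple_eval (s n) \<omega>) \<longlonglongrightarrow> f \<omega>))"

definition S_set :: "'a set set \<Rightarrow> ('a \<Rightarrow> ennreal) \<Rightarrow> 'a set \<Rightarrow> (real \<times> 'a set) list set" where
  "S_set \<Sigma> f E = {s. valid_simple \<Sigma> s \<and> (\<forall>\<omega>\<in>E. simple_eval s \<omega> \<le> f \<omega>)}"

definition d_integrable :: "(dfun \<Rightarrow> dfun \<Rightarrow> dfun) \<Rightarrow> 'a set set \<Rightarrow> ('a set \<Rightarrow> dfun) \<Rightarrow> ('a \<Rightarrow> ennreal) \<Rightarrow> 'a set \<Rightarrow> bool" where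
  "d_integrable \<tau> \<Sigma> \<gamma> f E \<longleftrightarrow> (\<exists>H\<in>Dplus. \<forall>s\<in>S_set \<Sigma> f E. dle H (simple_int \<tau> \<gamma> s E))"

definition is_dinf :: "dfun set \<Rightarrow> dfun \<Rightarrow> bool" where
  "is_dinf S H \<longleftrightarrow> H \<in> Dplus \<and> (\<forall>G\<in>S. dle H G) \<and> (\<forall>K\<in>Dplus. (\<forall>G\<in>S. dle K G) \<longrightarrow> dle K H)"

definition d_integral :: "(dfun \<Rightarrow> dfun \<Rightarrow> dfun) \<Rightarrow> 'a set set \<Rightarrow> ('a set \<Rightarrow> dfun) \<Rightarrow> ('a \<Rightarrow> ennreal) \<Rightarrow> 'a set \<Rightarrow> dfun" where
  "d_integral \<tau> \<Sigma> \<gamma> f E = (THE H. is_dinf ((\<lambda>s. simple_int \<tau> \<gamma> s E) ` S_set \<Sigma> f E) H)"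

end

theory Submission
  imports Defs
begin

text \<open>The integral is the greatest lower bound in \<open>Dplus\<close> of the integrals of the simple functions
  below \<open>f\<close>. For a simple function, distributivity and the interchange law of \<open>\<tau>\<close> split the integral
  with respect to \<open>\<gamma>1 \<oplus> \<gamma>2\<close> into the \<open>\<tau>\<close>-sum of the two integrals, so \<open>\<tau>\<close> applied to the two
  infima is a lower bound. The simple functions below \<open>f\<close> are directed under pointwise maximum and
  their integrals are antitone, so a single sequence of them has integrals converging weakly to
  both infima at once. Continuity of \<open>\<tau>\<close> then shows that every lower bound lies below \<open>\<tau>\<close> of the
  infima at its continuity points, hence everywhere.\<close>

section \<open>Distance distribution functions\<close>

lemma DplusD:
  assumes "F \<in> Dplus"
  shows "\<And>x. 0 \<le> F x" "\<And>x. F x \<le> 1" "mono F" "\<And>x. x \<le> 0 \<Longrightarrow> F x = 0" "F \<infinity> = 1"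
    "\<And>x::real. ((\<lambda>y. F (ereal y)) \<longlongrightarrow> F (ereal x)) (at_left x)"
  using assms unfolding Dplus_def by auto

lemma Dplus_MInfty: "F \<in> Dplus \<Longrightarrow> F (-\<infinity>) = 0"
  using DplusD(4)[of F "-\<infinity>"] by simp

lemma Dplus_monoD: "F \<in> Dplus \<Longrightarrow> x \<le> y \<Longrightarrow> F x \<le> F y"
  using DplusD(3) by (auto simp: mono_def)

lemma dle_refl: "dle F F"
  by (simp add: dle_def)

lemma dle_trans: "dle F G \<Longrightarrow> dle G H \<Longrightarrow> dle F H"
  unfolding dle_def by (meson order_trans)

lemma dle_antisym: "dle F G \<Longrightarrow> dle G F \<Longrightarrow> F = G"
  unfolding dle_def by (auto intro: antisym)

lemma eps0_Dplus: "eps 0 \<in> Dplus"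
proof -
  have "((\<lambda>y. eps 0 (ereal y)) \<longlongrightarrow> eps 0 (ereal x)) (at_left x)" for x :: real
  proof (rule tendsto_eventually)
    show "\<forall>\<^sub>F y in at_left x. eps 0 (ereal y) = eps 0 (ereal x)"
      unfolding eventually_at_left_field
      by (intro exI[of _ "if x \<le> 0 then x - 1 else 0"]) (auto simp: eps_def)
  qed
  moreover have "x \<le> 0 \<Longrightarrow> \<not> ereal 0 < x" for x :: ereal
    by (simp add: zero_ereal_def[symmetric])
  ultimately show ?thesis
    unfolding Dplus_def by (auto simp: eps_def mono_def)
qed

lemma dle_eps0: "F \<in> Dplus \<Longrightarrow> dle F (eps 0)"
  unfolding dle_def eps_def using DplusD[of F] by (auto simp: not_less zero_ereal_def[symmetric])

lemma smult_d_0 [simp]: "smult_d 0 G = eps 0"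
  by (simp add: smult_d_def)

lemma smult_d_eps0: "0 \<le> c \<Longrightarrow> smult_d c (eps 0) = eps 0"
proof (cases "c = 0")
  case False
  assume "0 \<le> c"
  then have c: "c > 0" using False by simp
  have "(ereal 0 < x / ereal c) = (ereal 0 < x)" for x
    using c by (cases x) (auto simp: zero_less_divide_iff)
  then show ?thesis using False unfolding smult_d_def eps_def by auto
qed simp

lemma smult_d_Dplus:
  assumes "0 \<le> c" "G \<in> Dplus"
  shows "smult_d c G \<in> Dplus"
proof (cases "c = 0")
  case True
  then show ?thesis by (simp add: eps0_Dplus)
next
  case False
  then have c: "c > 0" using assms by simp
  have "mono (\<lambda>x. G (x / ereal c))"
    unfolding mono_def using c
    by (auto intro!: Dplus_monoD[OF assms(2)] ereal_divide_right_mono)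
  moreover have "((\<lambda>y. G (ereal y / ereal c)) \<longlongrightarrow> G (ereal x / ereal c)) (at_left x)" for x
  proof -
    have "filterlim (\<lambda>y. y / c) (at_left (x / c)) (at_left x)"
    proof (rule tendsto_imp_filterlim_at_left)
      show "((\<lambda>y. y / c) \<longlongrightarrow> x / c) (at_left x)"
        using c by (intro tendsto_intros) auto
      show "\<forall>\<^sub>F y in at_left x. y / c < x / c"
        using c unfolding eventually_at_left_field
        by (intro exI[of _ "x - 1"]) (auto intro: divide_strict_right_mono)
    qed
    from filterlim_compose[OF DplusD(6)[OF assms(2), of "x / c"] this]
    show ?thesis using c by simp
  qed
  moreover have "x / ereal c \<le> 0" if "x \<le> 0" for x
    using c that by (cases x) (auto simp: divide_nonpos_pos)
  ultimately show ?thesis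
    unfolding Dplus_def smult_d_def using False c assms by (auto simp: DplusD)
qed

lemma smult_d_antimono:
  assumes "0 \<le> x" "x \<le> y" "G \<in> Dplus"
  shows "dle (smult_d y G) (smult_d x G)"
proof (cases "x = 0")
  case True
  then show ?thesis using smult_d_Dplus[OF _ assms(3), of y] assms dle_eps0 by auto
next
  case False
  then have pos: "x > 0" "y > 0" using assms by auto
  have "G (t / ereal y) \<le> G (t / ereal x)" for t
  proof (cases t)
    case (real r)
    show ?thesis
    proof (cases "r \<le> 0")
      case True
      then show ?thesis using real pos DplusD[OF assms(3)] by (simp add: divide_nonpos_pos)
    next
      case False
      then have "r / y \<le> r / x" using pos assms by (simp add: frac_le)
      then show ?thesis using real pos by (auto intro!: Dplus_monoD[OF assms(3)])
    qed
  qed (use pos in auto)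
  then show ?thesis using pos unfolding dle_def smult_d_def by auto
qed

lemma tf_distributiveD:
  "tf_distributive \<tau> \<Longrightarrow> 0 \<le> c \<Longrightarrow> G \<in> Dplus \<Longrightarrow> H \<in> Dplus
    \<Longrightarrow> smult_d c (\<tau> G H) = \<tau> (smult_d c G) (smult_d c H)"
  unfolding tf_distributive_def by blast

context
  fixes \<tau> :: "dfun \<Rightarrow> dfun \<Rightarrow> dfun"
  assumes tf: "triangle_function \<tau>"
begin

lemma tau_Dplus: "F \<in> Dplus \<Longrightarrow> G \<in> Dplus \<Longrightarrow> \<tau> F G \<in> Dplus"
  using tf unfolding triangle_function_def by blast

lemma tau_commute: "F \<in> Dplus \<Longrightarrow> G \<in> Dplus \<Longrightarrow> \<tau> F G = \<tau> G F"
  using tf unfolding triangle_function_def by blast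

lemma tau_assoc: "F \<in> Dplus \<Longrightarrow> G \<in> Dplus \<Longrightarrow> H \<in> Dplus \<Longrightarrow> \<tau> F (\<tau> G H) = \<tau> (\<tau> F G) H"
  using tf unfolding triangle_function_def by blast

lemma tau_eps0_right: "F \<in> Dplus \<Longrightarrow> \<tau> F (eps 0) = F"
  using tf unfolding triangle_function_def by blast

lemma tau_eps0_left: "F \<in> Dplus \<Longrightarrow> \<tau> (eps 0) F = F"
  using tau_eps0_right tau_commute eps0_Dplus by metis

lemma tau_mono:
  assumes "F \<in> Dplus" "G \<in> Dplus" "F' \<in> Dplus" "G' \<in> Dplus" "dle F G" "dle F' G'"
  shows "dle (\<tau> F F') (\<tau> G G')"
proof -
  have "dle (\<tau> F F') (\<tau> G F')"
    using tf assms unfolding triangle_function_def by blast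
  moreover have "dle (\<tau> F' G) (\<tau> G' G)"
    using tf assms unfolding triangle_function_def by blast
  ultimately show ?thesis
    using assms tau_commute by (metis dle_trans)
qed

lemma tau_interchange:
  assumes "a \<in> Dplus" "b \<in> Dplus" "c \<in> Dplus" "d \<in> Dplus"
  shows "\<tau> (\<tau> a b) (\<tau> c d) = \<tau> (\<tau> a c) (\<tau> b d)"
proof -
  have "\<tau> (\<tau> a b) (\<tau> c d) = \<tau> a (\<tau> (\<tau> b c) d)"
    using assms by (simp add: tau_assoc tau_Dplus)
  also have "\<dots> = \<tau> a (\<tau> (\<tau> c b) d)"
    using assms by (simp add: tau_commute)
  also have "\<dots> = \<tau> (\<tau> a c) (\<tau> b d)"
    using assms by (simp add: tau_assoc tau_Dplus)
  finally show ?thesis .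
qed

end

section \<open>Simple functions\<close>

lemma sigma_ring_Diff: "sigma_ring \<Omega> \<Sigma> \<Longrightarrow> A \<in> \<Sigma> \<Longrightarrow> B \<in> \<Sigma> \<Longrightarrow> A - B \<in> \<Sigma>"
  unfolding sigma_ring_def by blast

lemma sigma_ring_Int: "sigma_ring \<Omega> \<Sigma> \<Longrightarrow> A \<in> \<Sigma> \<Longrightarrow> B \<in> \<Sigma> \<Longrightarrow> A \<inter> B \<in> \<Sigma>"
  using sigma_ring_Diff[of \<Omega> \<Sigma> A "A - B"] sigma_ring_Diff[of \<Omega> \<Sigma> A B] by (simp add: Diff_Diff_Int)

lemma decomposable_Dplus: "decomposable \<tau> \<Sigma> \<gamma> \<Longrightarrow> A \<in> \<Sigma> \<Longrightarrow> \<gamma> A \<in> Dplus"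
  unfolding decomposable_def by blast

lemma decomposable_empty: "decomposable \<tau> \<Sigma> \<gamma> \<Longrightarrow> \<gamma> {} = eps 0"
  unfolding decomposable_def by blast

lemma decomposable_Un:
  "decomposable \<tau> \<Sigma> \<gamma> \<Longrightarrow> A \<in> \<Sigma> \<Longrightarrow> B \<in> \<Sigma> \<Longrightarrow> A \<inter> B = {} \<Longrightarrow> \<gamma> (A \<union> B) = \<tau> (\<gamma> A) (\<gamma> B)"
  unfolding decomposable_def by blast

lemma valid_simple_Nil [simp]: "valid_simple \<Sigma> []"
  by (simp add: valid_simple_def)

lemma valid_simple_Cons:
  "valid_simple \<Sigma> ((x, G) # s) \<longleftrightarrow>
     0 \<le> x \<and> G \<in> \<Sigma> \<and> (\<forall>(y, H)\<in>set s. G \<inter> H = {}) \<and> valid_simple \<Sigma> s"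
  unfolding valid_simple_def
  by (simp add: All_less_Suc2 all_set_conv_all_nth Int_commute split_beta) blast

lemma simple_eval_Nil [simp]: "simple_eval [] \<omega> = 0"
  by (simp add: simple_eval_def)

lemma simple_eval_Cons [simp]:
  "simple_eval ((x, G) # s) \<omega> = (if \<omega> \<in> G then ennreal x else 0) + simple_eval s \<omega>"
  by (simp add: simple_eval_def)

lemma simple_eval_eq_0: "\<forall>(y, H)\<in>set s. \<omega> \<notin> H \<Longrightarrow> simple_eval s \<omega> = 0"
  by (induction s) auto

lemma simple_int_Nil [simp]: "simple_int \<tau> \<gamma> [] A = eps 0"
  by (simp add: simple_int_def dsum_def)

lemma simple_int_Cons [simp]:
  "simple_int \<tau> \<gamma> ((x, G) # s) A = \<tau> (smult_d x (\<gamma> (A \<inter> G))) (simple_int \<tau> \<gamma> s A)"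
  by (simp add: simple_int_def dsum_def)

context
  fixes \<tau> :: "dfun \<Rightarrow> dfun \<Rightarrow> dfun" and \<Omega> :: "'a set" and \<Sigma> and \<gamma> :: "'a set \<Rightarrow> dfun"
  assumes tf: "triangle_function \<tau>" and td: "tf_distributive \<tau>"
    and sr: "sigma_ring \<Omega> \<Sigma>" and dec: "decomposable \<tau> \<Sigma> \<gamma>"
begin

lemma simple_int_Dplus: "valid_simple \<Sigma> s \<Longrightarrow> A \<in> \<Sigma> \<Longrightarrow> simple_int \<tau> \<gamma> s A \<in> Dplus"
proof (induction s)
  case Nil
  then show ?case by (simp add: eps0_Dplus)
next
  case (Cons p s)
  obtain x G where p: "p = (x, G)" by (cases p)
  have v: "0 \<le> x" "G \<in> \<Sigma>" "valid_simple \<Sigma> s"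
    using Cons.prems unfolding p valid_simple_Cons by auto
  have "smult_d x (\<gamma> (A \<inter> G)) \<in> Dplus"
    using v Cons.prems by (intro smult_d_Dplus decomposable_Dplus[OF dec] sigma_ring_Int[OF sr]) auto
  then show ?case using Cons v unfolding p by (simp add: tau_Dplus[OF tf])
qed

lemma simple_int_eq_eps0:
  "valid_simple \<Sigma> s \<Longrightarrow> \<forall>(y, H)\<in>set s. A \<inter> H = {} \<Longrightarrow> simple_int \<tau> \<gamma> s A = eps 0"
proof (induction s)
  case Nil
  then show ?case by simp
next
  case (Cons p s)
  obtain x G where p: "p = (x, G)" by (cases p)
  have v: "0 \<le> x" "valid_simple \<Sigma> s" "A \<inter> G = {}"
    using Cons.prems unfolding p valid_simple_Cons by auto
  then show ?case using Cons unfolding p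
    by (simp add: decomposable_empty[OF dec] smult_d_eps0 tau_eps0_right[OF tf] eps0_Dplus)
qed

lemma simple_int_split:
  assumes "valid_simple \<Sigma> s" "A \<in> \<Sigma>" "G \<in> \<Sigma>"
  shows "simple_int \<tau> \<gamma> s A = \<tau> (simple_int \<tau> \<gamma> s (A \<inter> G)) (simple_int \<tau> \<gamma> s (A - G))"
  using assms(1)
proof (induction s)
  case Nil
  then show ?case by (simp add: tau_eps0_right[OF tf] eps0_Dplus)
next
  case (Cons p s)
  obtain x H where p: "p = (x, H)" by (cases p)
  have v: "0 \<le> x" "H \<in> \<Sigma>" "valid_simple \<Sigma> s"
    using Cons.prems unfolding p valid_simple_Cons by auto
  have S: "A \<inter> G \<inter> H \<in> \<Sigma>" "(A - G) \<inter> H \<in> \<Sigma>" "A \<inter> G \<in> \<Sigma>" "A - G \<in> \<Sigma>"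
    using v assms by (auto intro!: sigma_ring_Int[OF sr] sigma_ring_Diff[OF sr])
  have "A \<inter> H = (A \<inter> G \<inter> H) \<union> ((A - G) \<inter> H)" by blast
  then have "\<gamma> (A \<inter> H) = \<tau> (\<gamma> (A \<inter> G \<inter> H)) (\<gamma> ((A - G) \<inter> H))"
    using decomposable_Un[OF dec S(1,2)] by auto
  then have "smult_d x (\<gamma> (A \<inter> H))
      = \<tau> (smult_d x (\<gamma> (A \<inter> G \<inter> H))) (smult_d x (\<gamma> ((A - G) \<inter> H)))"
    using S v by (simp add: tf_distributiveD[OF td] decomposable_Dplus[OF dec])
  moreover have "smult_d x (\<gamma> (A \<inter> G \<inter> H)) \<in> Dplus" "smult_d x (\<gamma> ((A - G) \<inter> H)) \<in> Dplus"
    "simple_int \<tau> \<gamma> s (A \<inter> G) \<in> Dplus" "simple_int \<tau> \<gamma> s (A - G) \<in> Dplus"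
    using S v by (auto intro!: smult_d_Dplus decomposable_Dplus[OF dec] simple_int_Dplus)
  ultimately show ?case
    using Cons v unfolding p by (simp add: tau_interchange[OF tf])
qed

lemma simple_int_Cons_split:
  assumes "valid_simple \<Sigma> ((x, G) # s)" "A \<in> \<Sigma>"
  shows "simple_int \<tau> \<gamma> ((x, G) # s) A = \<tau> (smult_d x (\<gamma> (A \<inter> G))) (simple_int \<tau> \<gamma> s (A - G))"
proof -
  have v: "G \<in> \<Sigma>" "valid_simple \<Sigma> s" "\<forall>(y, H)\<in>set s. G \<inter> H = {}"
    using assms unfolding valid_simple_Cons by auto
  have "simple_int \<tau> \<gamma> s A = \<tau> (simple_int \<tau> \<gamma> s (A \<inter> G)) (simple_int \<tau> \<gamma> s (A - G))"
    using simple_int_split v assms by blast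
  moreover have "simple_int \<tau> \<gamma> s (A \<inter> G) = eps 0"
    using v by (intro simple_int_eq_eps0) auto
  moreover have "simple_int \<tau> \<gamma> s (A - G) \<in> Dplus"
    using v assms by (intro simple_int_Dplus sigma_ring_Diff[OF sr])
  ultimately show ?thesis by (simp add: tau_eps0_left[OF tf])
qed

lemma smult_dle_simple_int:
  assumes "valid_simple \<Sigma> s" "A \<in> \<Sigma>" "0 \<le> y" "\<forall>\<omega>\<in>A. simple_eval s \<omega> \<le> ennreal y"
  shows "dle (smult_d y (\<gamma> A)) (simple_int \<tau> \<gamma> s A)"
  using assms
proof (induction s arbitrary: A)
  case Nil
  then show ?case
    by (cases "y = 0") (auto simp: dle_refl intro: dle_eps0 smult_d_Dplus decomposable_Dplus[OF dec])
next
  case (Cons p s)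
  obtain x G where p: "p = (x, G)" by (cases p)
  have v: "0 \<le> x" "G \<in> \<Sigma>" "valid_simple \<Sigma> s"
    using Cons.prems unfolding p valid_simple_Cons by auto
  have S: "A \<inter> G \<in> \<Sigma>" "A - G \<in> \<Sigma>"
    using v Cons.prems by (auto intro!: sigma_ring_Int[OF sr] sigma_ring_Diff[OF sr])
  have "\<gamma> A = \<tau> (\<gamma> (A \<inter> G)) (\<gamma> (A - G))"
    using decomposable_Un[OF dec S] by (simp add: Int_Diff_disjoint Int_Diff_Un)
  then have split_lhs: "smult_d y (\<gamma> A) = \<tau> (smult_d y (\<gamma> (A \<inter> G))) (smult_d y (\<gamma> (A - G)))"
    using S Cons.prems by (simp add: tf_distributiveD[OF td] decomposable_Dplus[OF dec])
  have head: "dle (smult_d y (\<gamma> (A \<inter> G))) (smult_d x (\<gamma> (A \<inter> G)))"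
  proof (cases "A \<inter> G = {}")
    case True
    then show ?thesis
      using v Cons.prems by (simp add: decomposable_empty[OF dec] smult_d_eps0 dle_refl)
  next
    case False
    then obtain \<omega> where \<omega>: "\<omega> \<in> A" "\<omega> \<in> G" by blast
    have "ennreal x \<le> simple_eval (p # s) \<omega>" unfolding p using \<omega> by simp
    also have "\<dots> \<le> ennreal y" using Cons.prems \<omega> by blast
    finally have "x \<le> y" using Cons.prems by simp
    then show ?thesis using v S by (intro smult_d_antimono decomposable_Dplus[OF dec]) auto
  qed
  have tail: "dle (smult_d y (\<gamma> (A - G))) (simple_int \<tau> \<gamma> s (A - G))"
    using Cons.prems v S by (intro Cons.IH) (auto simp: p split: if_splits)
  show ?case
    unfolding p simple_int_Cons_split[OF Cons.prems(1)[unfolded p] Cons.prems(2)] split_lhs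
    using head tail S v Cons.prems
    by (intro tau_mono[OF tf] smult_d_Dplus decomposable_Dplus[OF dec] simple_int_Dplus) auto
qed

lemma simple_int_antimono:
  assumes "valid_simple \<Sigma> s" "valid_simple \<Sigma> u" "A \<in> \<Sigma>"
    and "\<forall>\<omega>\<in>A. simple_eval s \<omega> \<le> simple_eval u \<omega>"
  shows "dle (simple_int \<tau> \<gamma> u A) (simple_int \<tau> \<gamma> s A)"
  using assms(2-4)
proof (induction u arbitrary: A)
  case Nil
  have "dle (smult_d 0 (\<gamma> A)) (simple_int \<tau> \<gamma> s A)"
    using Nil assms(1) by (intro smult_dle_simple_int) auto
  then show ?case by simp
next
  case (Cons p u)
  obtain y F where p: "p = (y, F)" by (cases p)
  have v: "0 \<le> y" "F \<in> \<Sigma>" "valid_simple \<Sigma> u" "\<forall>(z, H)\<in>set u. F \<inter> H = {}"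
    using Cons.prems unfolding p valid_simple_Cons by auto
  have S: "A \<inter> F \<in> \<Sigma>" "A - F \<in> \<Sigma>"
    using v Cons.prems by (auto intro!: sigma_ring_Int[OF sr] sigma_ring_Diff[OF sr])
  have head: "dle (smult_d y (\<gamma> (A \<inter> F))) (simple_int \<tau> \<gamma> s (A \<inter> F))"
  proof (rule smult_dle_simple_int)
    show "\<forall>\<omega>\<in>A \<inter> F. simple_eval s \<omega> \<le> ennreal y"
    proof
      fix \<omega> assume \<omega>: "\<omega> \<in> A \<inter> F"
      have "simple_eval u \<omega> = 0" using v \<omega> by (intro simple_eval_eq_0) auto
      then have "simple_eval (p # u) \<omega> = ennreal y" using \<omega> unfolding p by simp
      then show "simple_eval s \<omega> \<le> ennreal y" using Cons.prems \<omega> by auto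
    qed
  qed (use assms(1) S v in auto)
  have tail: "dle (simple_int \<tau> \<gamma> u (A - F)) (simple_int \<tau> \<gamma> s (A - F))"
    using Cons.prems v S by (intro Cons.IH) (auto simp: p)
  show ?case
    unfolding p simple_int_Cons_split[OF Cons.prems(1)[unfolded p] Cons.prems(2)]
      simple_int_split[OF assms(1) Cons.prems(2) v(2)]
    using head tail S v assms(1)
    by (intro tau_mono[OF tf] smult_d_Dplus decomposable_Dplus[OF dec] simple_int_Dplus) auto
qed

end

lemma simple_int_msum:
  assumes tf: "triangle_function \<tau>" and td: "tf_distributive \<tau>" and sr: "sigma_ring \<Omega> \<Sigma>"
    and dec1: "decomposable \<tau> \<Sigma> \<gamma>1" and dec2: "decomposable \<tau> \<Sigma> \<gamma>2" and A: "A \<in> \<Sigma>"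
  shows "valid_simple \<Sigma> s \<Longrightarrow>
    simple_int \<tau> (msum \<tau> \<gamma>1 \<gamma>2) s A = \<tau> (simple_int \<tau> \<gamma>1 s A) (simple_int \<tau> \<gamma>2 s A)"
proof (induction s)
  case Nil
  then show ?case by (simp add: tau_eps0_right[OF tf] eps0_Dplus)
next
  case (Cons p s)
  obtain x G where p: "p = (x, G)" by (cases p)
  have v: "0 \<le> x" "G \<in> \<Sigma>" "valid_simple \<Sigma> s"
    using Cons.prems unfolding p valid_simple_Cons by auto
  have "A \<inter> G \<in> \<Sigma>" using v A by (intro sigma_ring_Int[OF sr])
  then have \<gamma>: "\<gamma>1 (A \<inter> G) \<in> Dplus" "\<gamma>2 (A \<inter> G) \<in> Dplus"
    using decomposable_Dplus dec1 dec2 by blast+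
  have "smult_d x (msum \<tau> \<gamma>1 \<gamma>2 (A \<inter> G)) = \<tau> (smult_d x (\<gamma>1 (A \<inter> G))) (smult_d x (\<gamma>2 (A \<inter> G)))"
    unfolding msum_def using tf_distributiveD[OF td v(1) \<gamma>] .
  moreover have "smult_d x (\<gamma>1 (A \<inter> G)) \<in> Dplus" "smult_d x (\<gamma>2 (A \<inter> G)) \<in> Dplus"
    using \<gamma> v by (auto intro: smult_d_Dplus)
  moreover have "simple_int \<tau> \<gamma>1 s A \<in> Dplus" "simple_int \<tau> \<gamma>2 s A \<in> Dplus"
    using simple_int_Dplus[OF tf td sr dec1 v(3) A] simple_int_Dplus[OF tf td sr dec2 v(3) A] .
  ultimately show ?case
    unfolding p using Cons v by (simp add: tau_interchange[OF tf])
qed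

text \<open>Representations of the pointwise maximum of simple functions, with pairwise disjoint sets.\<close>

fun max_ins :: "real \<times> 'a set \<Rightarrow> (real \<times> 'a set) list \<Rightarrow> (real \<times> 'a set) list" where
  "max_ins (y, F) [] = [(y, F)]"
| "max_ins (y, F) ((x, G) # s) = (max x y, G \<inter> F) # (x, G - F) # max_ins (y, F - G) s"

fun max_join :: "(real \<times> 'a set) list \<Rightarrow> (real \<times> 'a set) list \<Rightarrow> (real \<times> 'a set) list" where
  "max_join s [] = s"
| "max_join s (p # t) = max_join (max_ins p s) t"

lemma max_ins_subset: "(z, H) \<in> set (max_ins (y, F) s) \<Longrightarrow> H \<subseteq> F \<union> \<Union>(snd ` set s)"
proof (induction s arbitrary: F z H)
  case Nil
  then show ?case by auto
next
  case (Cons p s)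
  obtain x G where p: "p = (x, G)" by (cases p)
  show ?case
    using Cons.prems Cons.IH[of z H "F - G"] unfolding p by auto
qed

lemma ennreal_max: "ennreal (max a b) = max (ennreal a) (ennreal b)"
  by (simp add: max_of_mono mono_def ennreal_leI)

lemma valid_simple_max_ins:
  assumes sr: "sigma_ring \<Omega> \<Sigma>"
  shows "valid_simple \<Sigma> s \<Longrightarrow> F \<in> \<Sigma> \<Longrightarrow> 0 \<le> y \<Longrightarrow> valid_simple \<Sigma> (max_ins (y, F) s)"
proof (induction s arbitrary: F)
  case Nil
  then show ?case by (simp add: valid_simple_Cons)
next
  case (Cons p s)
  obtain x G where p: "p = (x, G)" by (cases p)
  have v: "0 \<le> x" "G \<in> \<Sigma>" "valid_simple \<Sigma> s" "\<forall>(z, H)\<in>set s. G \<inter> H = {}"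
    using Cons.prems unfolding p valid_simple_Cons by auto
  have S: "G \<inter> F \<in> \<Sigma>" "G - F \<in> \<Sigma>" "F - G \<in> \<Sigma>"
    using v Cons.prems by (auto intro!: sigma_ring_Int[OF sr] sigma_ring_Diff[OF sr])
  have "G \<inter> H = {}" if "(z, H) \<in> set (max_ins (y, F - G) s)" for z H
    using max_ins_subset[OF that] v(4) by fastforce
  then show ?case
    unfolding p max_ins.simps valid_simple_Cons
    using Cons.IH[OF v(3) S(3) Cons.prems(3)] S v by (auto simp: le_max_iff_disj)
qed

lemma simple_eval_max_ins:
  "valid_simple \<Sigma> s \<Longrightarrow>
    simple_eval (max_ins (y, F) s) \<omega> = max (simple_eval s \<omega>) (if \<omega> \<in> F then ennreal y else 0)"
proof (induction s arbitrary: F)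
  case Nil
  then show ?case by simp
next
  case (Cons p s)
  obtain x G where p: "p = (x, G)" by (cases p)
  have v: "valid_simple \<Sigma> s" "\<forall>(z, H)\<in>set s. G \<inter> H = {}"
    using Cons.prems unfolding p valid_simple_Cons by auto
  have "simple_eval s \<omega> = 0" if "\<omega> \<in> G"
    using v(2) that by (intro simple_eval_eq_0) blast
  then show ?case
    unfolding p using Cons.IH[OF v(1)] by (simp add: ennreal_max)
qed

lemma valid_simple_max_join:
  assumes sr: "sigma_ring \<Omega> \<Sigma>"
  shows "valid_simple \<Sigma> s \<Longrightarrow> valid_simple \<Sigma> t \<Longrightarrow> valid_simple \<Sigma> (max_join s t)"
proof (induction t arbitrary: s)
  case Nil
  then show ?case by simp
next
  case (Cons p t)
  obtain y F where p: "p = (y, F)" by (cases p)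
  have v: "0 \<le> y" "F \<in> \<Sigma>" "valid_simple \<Sigma> t"
    using Cons.prems unfolding p valid_simple_Cons by auto
  show ?case
    unfolding p max_join.simps
    using Cons.IH[OF valid_simple_max_ins[OF sr Cons.prems(1) v(2,1)] v(3)] .
qed

lemma simple_eval_max_join:
  assumes sr: "sigma_ring \<Omega> \<Sigma>"
  shows "valid_simple \<Sigma> s \<Longrightarrow> valid_simple \<Sigma> t \<Longrightarrow>
    simple_eval (max_join s t) \<omega> = max (simple_eval s \<omega>) (simple_eval t \<omega>)"
proof (induction t arbitrary: s)
  case Nil
  then show ?case by simp
next
  case (Cons p t)
  obtain y F where p: "p = (y, F)" by (cases p)
  have v: "0 \<le> y" "F \<in> \<Sigma>" "valid_simple \<Sigma> t" "\<forall>(z, H)\<in>set t. F \<inter> H = {}"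
    using Cons.prems unfolding p valid_simple_Cons by auto
  have "simple_eval t \<omega> = 0" if "\<omega> \<in> F"
    using v(4) that by (intro simple_eval_eq_0) blast
  then show ?case
    unfolding p max_join.simps Cons.IH[OF valid_simple_max_ins[OF sr Cons.prems(1) v(2,1)] v(3)]
    using simple_eval_max_ins[OF Cons.prems(1)] by (simp add: max.assoc)
qed

lemma max_join_S_set:
  assumes "sigma_ring \<Omega> \<Sigma>" "s \<in> S_set \<Sigma> f E" "t \<in> S_set \<Sigma> f E"
  shows "max_join s t \<in> S_set \<Sigma> f E"
  using assms valid_simple_max_join simple_eval_max_join unfolding S_set_def by fastforce

section \<open>Greatest lower bounds in \<open>Dplus\<close>\<close>

definition Pinf :: "dfun set \<Rightarrow> ereal \<Rightarrow> real" where
  "Pinf S y = (INF F\<in>S. F y)"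

text \<open>The pointwise infimum need not be left-continuous; its left-continuous regularisation
  is the greatest lower bound in \<open>Dplus\<close>.\<close>

definition glbD :: "dfun set \<Rightarrow> dfun" where
  "glbD S y = (case y of ereal x \<Rightarrow> (SUP z\<in>{..<x}. Pinf S (ereal z)) | PInfty \<Rightarrow> 1 | MInfty \<Rightarrow> 0)"

lemma glbD_PInfty [simp]: "glbD S \<infinity> = 1"
  by (simp add: glbD_def)

lemma glbD_MInfty [simp]: "glbD S (-\<infinity>) = 0"
  by (simp add: glbD_def)

lemma is_dinf_unique: "is_dinf S G \<Longrightarrow> is_dinf S G' \<Longrightarrow> G = G'"
  unfolding is_dinf_def by (meson dle_antisym)

context
  fixes S :: "dfun set"
  assumes ne: "S \<noteq> {}" and sub: "S \<subseteq> Dplus"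
begin

lemma bdd_below_Pinf: "bdd_below ((\<lambda>F. F y) ` S)"
  using sub DplusD(1) by (intro bdd_belowI[of _ 0]) auto

lemma Pinf_le: "F \<in> S \<Longrightarrow> Pinf S y \<le> F y"
  unfolding Pinf_def using bdd_below_Pinf by (rule cINF_lower)

lemma Pinf_nonneg: "0 \<le> Pinf S y"
  unfolding Pinf_def using ne sub DplusD(1) by (intro cINF_greatest) auto

lemma Pinf_le_1: "Pinf S y \<le> 1"
proof -
  obtain F where "F \<in> S" using ne by blast
  then show ?thesis using Pinf_le[of F y] sub DplusD(2)[of F y] by auto
qed

lemma Pinf_mono: "y \<le> y' \<Longrightarrow> Pinf S y \<le> Pinf S y'"
  unfolding Pinf_def using ne
  by (intro cINF_greatest)
    (auto intro: order_trans[OF cINF_lower[OF bdd_below_Pinf] Dplus_monoD] dest: subsetD[OF sub])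

lemma Pinf_eq_0: "y \<le> 0 \<Longrightarrow> Pinf S y = 0"
proof -
  assume "y \<le> 0"
  then have "(INF F\<in>S. F y) = (INF F\<in>S. 0)"
    using sub DplusD(4) by (intro INF_cong) auto
  then show ?thesis unfolding Pinf_def using ne by simp
qed

lemma Pinf_less_iff: "Pinf S y < a \<longleftrightarrow> (\<exists>F\<in>S. F y < a)"
  unfolding Pinf_def using cINF_less_iff[OF ne bdd_below_Pinf] .

lemma bdd_above_Pinf: "bdd_above ((\<lambda>z. Pinf S (ereal z)) ` A)"
  using Pinf_le_1 by (intro bdd_aboveI[of _ 1]) auto

lemma Pinf_le_glbD: "z < x \<Longrightarrow> Pinf S (ereal z) \<le> glbD S (ereal x)"
  unfolding glbD_def using bdd_above_Pinf by (auto intro!: cSUP_upper)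

lemma glbD_le_Pinf: "glbD S (ereal x) \<le> Pinf S (ereal x)"
  unfolding glbD_def by (auto intro!: cSUP_least Pinf_mono)

lemma glbD_nonneg: "0 \<le> glbD S y"
proof (cases y)
  case (real x)
  then show ?thesis using Pinf_le_glbD[of "x - 1" x] Pinf_nonneg[of "ereal (x - 1)"] by auto
qed (auto simp: glbD_def)

lemma glbD_le_1: "glbD S y \<le> 1"
proof (cases y)
  case (real x)
  then show ?thesis using glbD_le_Pinf[of x] Pinf_le_1[of "ereal x"] by auto
qed (auto simp: glbD_def)

lemma glbD_mono_real: "x \<le> x' \<Longrightarrow> glbD S (ereal x) \<le> glbD S (ereal x')"
  unfolding glbD_def by (auto intro!: cSUP_subset_mono bdd_above_Pinf)

lemma glbD_mono: "mono (glbD S)"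
proof (rule monoI)
  fix y y' :: ereal
  assume "y \<le> y'"
  then show "glbD S y \<le> glbD S y'"
    using glbD_mono_real glbD_nonneg glbD_le_1
    by (cases y; cases y') auto
qed

lemma glbD_tendsto_at_left: "((\<lambda>y. glbD S (ereal y)) \<longlongrightarrow> glbD S (ereal x)) (at_left x)"
proof (rule order_tendstoI)
  fix a
  assume "a < glbD S (ereal x)"
  then obtain z where z: "z < x" "a < Pinf S (ereal z)"
    using less_cSUP_iff[OF _ bdd_above_Pinf, of "{..<x}" a] by (auto simp: glbD_def)
  then show "\<forall>\<^sub>F y in at_left x. a < glbD S (ereal y)"
    unfolding eventually_at_left_field
    by (intro exI[of _ z]) (auto intro: less_le_trans[OF _ Pinf_le_glbD])
next
  fix a
  assume "glbD S (ereal x) < a"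
  then show "\<forall>\<^sub>F y in at_left x. glbD S (ereal y) < a"
    unfolding eventually_at_left_field
    by (intro exI[of _ "x - 1"]) (auto intro: le_less_trans[OF glbD_mono_real[of _ x]])
qed

lemma glbD_eq_0: "y \<le> 0 \<Longrightarrow> glbD S y = 0"
proof (cases y)
  case (real x)
  assume "y \<le> 0"
  then have "(SUP z\<in>{..<x}. Pinf S (ereal z)) = (SUP z\<in>{..<x}. 0)"
    using real by (intro SUP_cong) (auto intro!: Pinf_eq_0)
  then show ?thesis using real by (simp add: glbD_def)
qed (auto simp: glbD_def)

lemma glbD_Dplus: "glbD S \<in> Dplus"
  unfolding Dplus_def
  using glbD_nonneg glbD_le_1 glbD_mono glbD_tendsto_at_left glbD_eq_0 by (auto simp: glbD_def)

lemma glbD_dle: "F \<in> S \<Longrightarrow> dle (glbD S) F"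
  unfolding dle_def
proof
  fix y
  assume F: "F \<in> S"
  note DF = DplusD[OF subsetD[OF sub F]]
  show "glbD S y \<le> F y"
  proof (cases y)
    case (real x)
    have "(SUP z\<in>{..<x}. Pinf S (ereal z)) \<le> F (ereal x)"
      by (intro cSUP_least) (auto intro: order_trans[OF Pinf_le[OF F] Dplus_monoD[OF subsetD[OF sub F]]])
    then show ?thesis using real by (simp add: glbD_def)
  qed (use DF in auto)
qed

lemma dle_glbD:
  assumes K: "K \<in> Dplus" "\<forall>G\<in>S. dle K G"
  shows "dle K (glbD S)"
  unfolding dle_def
proof
  fix y
  show "K y \<le> glbD S y"
  proof (cases y)
    case (real x)
    have "K (ereal z) \<le> glbD S (ereal x)" if "z < x" for z
    proof -
      have "K (ereal z) \<le> Pinf S (ereal z)"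
        unfolding Pinf_def using ne K by (intro cINF_greatest) (auto simp: dle_def)
      then show ?thesis using Pinf_le_glbD[OF that] by linarith
    qed
    then have "K (ereal x) \<le> glbD S (ereal x)"
      by (intro tendsto_upperbound[OF DplusD(6)[OF K(1)]])
        (auto simp: eventually_at_left_field intro!: exI[of _ "x - 1"])
    then show ?thesis using real by simp
  qed (use DplusD(2,5)[OF K(1)] Dplus_MInfty[OF K(1)] in auto)
qed

lemma is_dinf_glbD: "is_dinf S (glbD S)"
  unfolding is_dinf_def using glbD_Dplus glbD_dle dle_glbD by blast

end

lemma dle_if_dle_at_continuity_points:
  assumes K: "K \<in> Dplus" and H: "H \<in> Dplus"
    and le: "\<And>x::real. isCont (\<lambda>y. H (ereal y)) x \<Longrightarrow> K (ereal x) \<le> H (ereal x)"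
  shows "dle K H"
  unfolding dle_def
proof
  fix y
  show "K y \<le> H y"
  proof (cases y)
    case (real x)
    have "K (ereal z) \<le> H (ereal x)" if "z < x" for z
    proof -
      have "mono (\<lambda>y. H (ereal y))" using DplusD(3)[OF H] by (auto simp: mono_def)
      from open_minus_countable[OF mono_ctble_discont[OF this], of "{z<..<x}"] that
      obtain w where w: "z < w" "w < x" "isCont (\<lambda>y. H (ereal y)) w" by auto
      have "K (ereal z) \<le> K (ereal w)" using w by (intro Dplus_monoD[OF K]) auto
      also have "\<dots> \<le> H (ereal w)" using w le by auto
      also have "\<dots> \<le> H (ereal x)" using w by (intro Dplus_monoD[OF H]) auto
      finally show ?thesis .
    qed
    then have "K (ereal x) \<le> H (ereal x)"
      by (intro tendsto_upperbound[OF DplusD(6)[OF K]])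
        (auto simp: eventually_at_left_field intro!: exI[of _ "x - 1"])
    then show ?thesis using real by simp
  qed (use DplusD(5)[OF K] DplusD(5)[OF H] Dplus_MInfty[OF K] Dplus_MInfty[OF H] in auto)
qed

lemma weak_conv_glbD:
  assumes ne: "S \<noteq> {}" and sub: "S \<subseteq> Dplus" and F: "\<And>n. F n \<in> S"
    and rat: "\<And>q. (\<lambda>n. F n (ereal (of_rat q))) \<longlonglongrightarrow> Pinf S (ereal (of_rat q))"
  shows "weak_conv F (glbD S)"
  unfolding weak_conv_def
proof (intro allI impI order_tendstoI)
  fix x :: real and a
  assume "a < glbD S (ereal x)"
  moreover have "glbD S (ereal x) \<le> F n (ereal x)" for n
    using glbD_dle[OF ne sub F] by (simp add: dle_def)
  ultimately show "\<forall>\<^sub>F n in sequentially. a < F n (ereal x)"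
    by (intro always_eventually allI) (rule less_le_trans)
next
  fix x :: real and a
  assume cont: "isCont (\<lambda>y. glbD S (ereal y)) x" and "glbD S (ereal x) < a"
  then have "\<forall>\<^sub>F y in at_right x. glbD S (ereal y) < a"
    by (auto simp: isCont_def dest: order_tendstoD(2) filter_leD[OF at_le, rotated])
  then obtain b where "x < b" "\<forall>y>x. y < b \<longrightarrow> glbD S (ereal y) < a"
    by (auto simp: eventually_at_right_field)
  then obtain y where y: "x < y" "glbD S (ereal y) < a"
    by (meson dense)
  obtain q where q: "x < of_rat q" "of_rat q < y"
    using of_rat_dense[OF y(1)] by blast
  have "Pinf S (ereal (of_rat q)) < a"
    using Pinf_le_glbD[OF ne sub q(2)] y(2) by linarith
  with rat have "\<forall>\<^sub>F n in sequentially. F n (ereal (of_rat q)) < a"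
    by (rule order_tendstoD(2))
  moreover have "F n (ereal x) \<le> F n (ereal (of_rat q))" for n
    using F sub q(1) by (intro Dplus_monoD) auto
  ultimately show "\<forall>\<^sub>F n in sequentially. F n (ereal x) < a"
    by (elim eventually_mono) (blast intro: le_less_trans)
qed

lemma decseq_tendstoI:
  fixes X :: "nat \<Rightarrow> real"
  assumes "decseq X" "\<And>n. p \<le> X n" "\<And>e. 0 < e \<Longrightarrow> \<exists>n. X n < p + e"
  shows "X \<longlonglongrightarrow> p"
proof (rule order_tendstoI)
  fix a
  assume "a < p"
  then show "\<forall>\<^sub>F n in sequentially. a < X n"
    using assms(2) by (intro always_eventually allI) (rule less_le_trans)
next
  fix a
  assume "p < a"
  then obtain N where "X N < a"
    using assms(3)[of "a - p"] by auto
  then show "\<forall>\<^sub>F n in sequentially. X n < a"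
    using decseqD[OF assms(1)] unfolding eventually_sequentially by (blast intro: le_less_trans)
qed

lemma directed_seq_below:
  fixes R :: "'b \<Rightarrow> 'b \<Rightarrow> bool"
  assumes w: "\<And>n. w n \<in> S" and dir: "\<And>s t. s \<in> S \<Longrightarrow> t \<in> S \<Longrightarrow> \<exists>u\<in>S. R u s \<and> R u t"
  obtains u where "\<And>n. u n \<in> S" "\<And>n. R (u (Suc n)) (u n)" "\<And>n. R (u (Suc n)) (w n)"
proof -
  define J where "J s t = (SOME u. u \<in> S \<and> R u s \<and> R u t)" for s t
  have J: "J s t \<in> S \<and> R (J s t) s \<and> R (J s t) t" if "s \<in> S" "t \<in> S" for s t
    using someI_ex[OF dir[OF that, unfolded Bex_def]] unfolding J_def .
  define u where "u = rec_nat (w 0) (\<lambda>n s. J s (w n))"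
  have u: "u n \<in> S" for n
    by (induction n) (simp_all add: u_def w J)
  have "u (Suc n) = J (u n) (w n)" for n
    by (simp add: u_def)
  then show ?thesis
    using that u J w by metis
qed

lemma directed_seq_tendsto_Pinf:
  fixes I :: "'c::countable \<Rightarrow> 'b \<Rightarrow> dfun"
  assumes ne: "S \<noteq> {}" and D: "\<And>s b. s \<in> S \<Longrightarrow> I b s \<in> Dplus"
    and dir: "\<And>s t. s \<in> S \<Longrightarrow> t \<in> S \<Longrightarrow>
      \<exists>u\<in>S. (\<forall>b. dle (I b u) (I b s)) \<and> (\<forall>b. dle (I b u) (I b t))"
  obtains u where "\<And>n. u n \<in> S"
    and "\<And>b q. (\<lambda>n. I b (u n) (ereal (of_rat q))) \<longlonglongrightarrow> Pinf (I b ` S) (ereal (of_rat q))"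
proof -
  define P where "P b q = Pinf (I b ` S) (ereal (of_rat q))" for b q
  have P_le: "P b q \<le> I b s (ereal (of_rat q))" if "s \<in> S" for s b q
    unfolding P_def using Pinf_le[of "I b ` S"] ne D that by blast
  have witness: "\<exists>c. c \<in> S \<and> I b c (ereal (of_rat q)) < P b q + inverse (Suc m)" for q m b
    using Pinf_less_iff[of "I b ` S" "ereal (of_rat q)" "P b q + inverse (Suc m)"] ne D
    unfolding P_def by auto
  define c where
    "c = (\<lambda>(q, m, b). SOME c. c \<in> S \<and> I b c (ereal (of_rat q)) < P b q + inverse (Suc m))"
  have c: "c (q, m, b) \<in> S" "I b (c (q, m, b)) (ereal (of_rat q)) < P b q + inverse (Suc m)"
    for q m b
    using someI_ex[OF witness[of b q m]] unfolding c_def by auto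
  have "c k \<in> S" for k
    using c(1) by (cases k) auto
  \<comment> \<open>enumerate all witnesses \<open>c (q, m, b)\<close> and go below each of them in turn\<close>
  from directed_seq_below[of "\<lambda>n. c (from_nat n)" S "\<lambda>u s. \<forall>b. dle (I b u) (I b s)", OF this dir]
  obtain u where u: "\<And>n. u n \<in> S" and dec: "\<And>n b. dle (I b (u (Suc n))) (I b (u n))"
    and below: "\<And>n b. dle (I b (u (Suc n))) (I b (c (from_nat n)))"
    by blast
  have "(\<lambda>n. I b (u n) (ereal (of_rat q))) \<longlonglongrightarrow> P b q" for b q
  proof (rule decseq_tendstoI)
    show "decseq (\<lambda>n. I b (u n) (ereal (of_rat q)))"
      using dec by (auto simp: decseq_Suc_iff dle_def)
    show "P b q \<le> I b (u n) (ereal (of_rat q))" for n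
      using P_le[OF u] .
    fix e :: real
    assume "0 < e"
    then obtain m where "inverse (Suc m) < e"
      using reals_Archimedean by blast
    then have "I b (u (Suc (to_nat (q, m, b)))) (ereal (of_rat q)) < P b q + e"
      using below[where n = "to_nat (q, m, b)" and b = b] c(2)[where q = q and m = m and b = b]
      unfolding dle_def by (smt (verit) from_nat_to_nat)
    then show "\<exists>n. I b (u n) (ereal (of_rat q)) < P b q + e" ..
  qed
  then show ?thesis using that u unfolding P_def by blast
qed

section \<open>Integrals with respect to the sum of two measures\<close>

lemma directed_weak_conv_tau_glbD:
  fixes I1 I2 :: "'b \<Rightarrow> dfun"
  assumes tf: "triangle_function \<tau>" and tc: "tf_continuous \<tau>"
    and ne: "S \<noteq> {}" and D: "I1 ` S \<subseteq> Dplus" "I2 ` S \<subseteq> Dplus"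
    and dir: "\<And>s t. s \<in> S \<Longrightarrow> t \<in> S \<Longrightarrow> \<exists>u\<in>S.
      dle (I1 u) (I1 s) \<and> dle (I1 u) (I1 t) \<and> dle (I2 u) (I2 s) \<and> dle (I2 u) (I2 t)"
  obtains u where "\<And>n. u n \<in> S"
    and "weak_conv (\<lambda>n. \<tau> (I1 (u n)) (I2 (u n))) (\<tau> (glbD (I1 ` S)) (glbD (I2 ` S)))"
proof -
  define I where "I b = (if b then I1 else I2)" for b
  have ne': "I b ` S \<noteq> {}" and D': "I b ` S \<subseteq> Dplus" for b
    using ne D by (auto simp: I_def)
  have "\<exists>u\<in>S. (\<forall>b. dle (I b u) (I b s)) \<and> (\<forall>b. dle (I b u) (I b t))" if "s \<in> S" "t \<in> S" for s t
    using dir[OF that] by (auto simp: I_def)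
  then obtain u where u: "\<And>n. u n \<in> S"
    and rat: "\<And>b q. (\<lambda>n. I b (u n) (ereal (of_rat q))) \<longlonglongrightarrow> Pinf (I b ` S) (ereal (of_rat q))"
    using directed_seq_tendsto_Pinf[of S I] ne D' by blast
  have "weak_conv (\<lambda>n. I b (u n)) (glbD (I b ` S))" for b
    using u D' rat by (intro weak_conv_glbD[OF ne']) auto
  then have "weak_conv (\<lambda>n. \<tau> (I True (u n)) (I False (u n))) (\<tau> (glbD (I True ` S)) (glbD (I False ` S)))"
    using tc[unfolded tf_continuous_def, rule_format, of "\<lambda>n. I True (u n)" "glbD (I True ` S)"
        "\<lambda>n. I False (u n)" "glbD (I False ` S)"] u D' glbD_Dplus[OF ne' D']
    by blast
  then show ?thesis
    by (intro that[OF u]) (simp add: I_def)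
qed

lemma is_dinf_tau_directed:
  fixes I1 I2 :: "'b \<Rightarrow> dfun"
  assumes tf: "triangle_function \<tau>" and tc: "tf_continuous \<tau>"
    and ne: "S \<noteq> {}" and D: "I1 ` S \<subseteq> Dplus" "I2 ` S \<subseteq> Dplus"
    and dir: "\<And>s t. s \<in> S \<Longrightarrow> t \<in> S \<Longrightarrow> \<exists>u\<in>S.
      dle (I1 u) (I1 s) \<and> dle (I1 u) (I1 t) \<and> dle (I2 u) (I2 s) \<and> dle (I2 u) (I2 t)"
  shows "is_dinf ((\<lambda>s. \<tau> (I1 s) (I2 s)) ` S) (\<tau> (glbD (I1 ` S)) (glbD (I2 ` S)))"
proof -
  define H where "H = \<tau> (glbD (I1 ` S)) (glbD (I2 ` S))"
  have ne': "I1 ` S \<noteq> {}" "I2 ` S \<noteq> {}" using ne by auto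
  have H: "H \<in> Dplus"
    unfolding H_def using glbD_Dplus ne' D by (simp add: tau_Dplus[OF tf])
  have lower: "dle H (\<tau> (I1 s) (I2 s))" if "s \<in> S" for s
    unfolding H_def using that ne' D glbD_Dplus glbD_dle by (intro tau_mono[OF tf]) auto
  have greatest: "dle K H" if K: "K \<in> Dplus" "\<And>s. s \<in> S \<Longrightarrow> dle K (\<tau> (I1 s) (I2 s))" for K
  proof -
    obtain u where u: "\<And>n. u n \<in> S" and conv: "weak_conv (\<lambda>n. \<tau> (I1 (u n)) (I2 (u n))) H"
      using directed_weak_conv_tau_glbD[OF tf tc ne D dir] unfolding H_def by blast
    show ?thesis
    proof (rule dle_if_dle_at_continuity_points[OF K(1) H])
      fix x :: real
      assume "isCont (\<lambda>y. H (ereal y)) x"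
      then have "(\<lambda>n. \<tau> (I1 (u n)) (I2 (u n)) (ereal x)) \<longlonglongrightarrow> H (ereal x)"
        using conv unfolding weak_conv_def by blast
      then show "K (ereal x) \<le> H (ereal x)"
        using K(2)[OF u] unfolding dle_def by (intro LIMSEQ_le_const) auto
    qed
  qed
  show ?thesis
    unfolding is_dinf_def H_def[symmetric] using H lower greatest by blast
qed

lemma d_integral_eqI:
  "is_dinf ((\<lambda>s. simple_int \<tau> \<gamma> s E) ` S_set \<Sigma> f E) H \<Longrightarrow> d_integral \<tau> \<Sigma> \<gamma> f E = H"
  unfolding d_integral_def by (blast intro: is_dinf_unique)

lemma d_integrable_if_is_dinf:
  "is_dinf ((\<lambda>s. simple_int \<tau> \<gamma> s E) ` S_set \<Sigma> f E) H \<Longrightarrow> d_integrable \<tau> \<Sigma> \<gamma> f E"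
  unfolding d_integrable_def is_dinf_def by blast

context
  fixes \<tau> :: "dfun \<Rightarrow> dfun \<Rightarrow> dfun" and \<Omega> :: "'a set" and \<Sigma> and \<gamma> :: "'a set \<Rightarrow> dfun"
  assumes tf: "triangle_function \<tau>" and td: "tf_distributive \<tau>"
    and sr: "sigma_ring \<Omega> \<Sigma>" and dec: "decomposable \<tau> \<Sigma> \<gamma>"
begin

lemma simple_int_S_set_Dplus:
  "E \<in> \<Sigma> \<Longrightarrow> (\<lambda>s. simple_int \<tau> \<gamma> s E) ` S_set \<Sigma> f E \<subseteq> Dplus"
  using simple_int_Dplus[OF tf td sr dec] by (auto simp: S_set_def)

lemma d_integral_eq_glbD:
  assumes "E \<in> \<Sigma>"
  shows "d_integral \<tau> \<Sigma> \<gamma> f E = glbD ((\<lambda>s. simple_int \<tau> \<gamma> s E) ` S_set \<Sigma> f E)"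
proof -
  have "[] \<in> S_set \<Sigma> f E" by (simp add: S_set_def)
  then show ?thesis
    using assms by (intro d_integral_eqI is_dinf_glbD simple_int_S_set_Dplus) auto
qed

lemma simple_int_max_join_dle:
  assumes "E \<in> \<Sigma>" "s \<in> S_set \<Sigma> f E" "t \<in> S_set \<Sigma> f E"
  shows "dle (simple_int \<tau> \<gamma> (max_join s t) E) (simple_int \<tau> \<gamma> s E)"
    and "dle (simple_int \<tau> \<gamma> (max_join s t) E) (simple_int \<tau> \<gamma> t E)"
  using assms simple_int_antimono[OF tf td sr dec] simple_eval_max_join[OF sr]
    valid_simple_max_join[OF sr]
  by (auto simp: S_set_def)

end

theorem theorem5p5:
  fixes \<tau> :: "dfun \<Rightarrow> dfun \<Rightarrow> dfun" and \<Omega> :: "'a set" and \<Sigma> :: "'a set set"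
    and \<gamma>1 \<gamma>2 :: "'a set \<Rightarrow> dfun" and f :: "'a \<Rightarrow> ennreal" and E :: "'a set"
  assumes "\<Omega> \<noteq> {}" and "sigma_ring \<Omega> \<Sigma>"
    and "triangle_function \<tau>" and "tf_continuous \<tau>" and "tf_distributive \<tau>"
    and "decomposable \<tau> \<Sigma> \<gamma>1" and "cont_below \<Sigma> \<gamma>1"
    and "decomposable \<tau> \<Sigma> \<gamma>2" and "cont_below \<Sigma> \<gamma>2"
    and "measurable_fn \<Omega> \<Sigma> f" and "E \<in> \<Sigma>"
    and "d_integrable \<tau> \<Sigma> \<gamma>1 f E" and "d_integrable \<tau> \<Sigma> \<gamma>2 f E"
  shows "d_integrable \<tau> \<Sigma> (msum \<tau> \<gamma>1 \<gamma>2) f E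
    \<and> d_integral \<tau> \<Sigma> (msum \<tau> \<gamma>1 \<gamma>2) f E = \<tau> (d_integral \<tau> \<Sigma> \<gamma>1 f E) (d_integral \<tau> \<Sigma> \<gamma>2 f E)"
proof -
  note sr = assms(2) and tf = assms(3) and tc = assms(4) and td = assms(5)
    and dec1 = assms(6) and dec2 = assms(8) and E = assms(11)
  define S where "S = S_set \<Sigma> f E"
  define I1 where "I1 s = simple_int \<tau> \<gamma>1 s E" for s
  define I2 where "I2 s = simple_int \<tau> \<gamma>2 s E" for s
  have "[] \<in> S" by (simp add: S_def S_set_def)
  moreover have "I1 ` S \<subseteq> Dplus" "I2 ` S \<subseteq> Dplus"
    unfolding S_def I1_def I2_def using simple_int_S_set_Dplus[OF tf td sr _ E] dec1 dec2 by auto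
  moreover have "\<exists>u\<in>S. dle (I1 u) (I1 s) \<and> dle (I1 u) (I1 t) \<and> dle (I2 u) (I2 s) \<and> dle (I2 u) (I2 t)"
    if "s \<in> S" "t \<in> S" for s t
    using that max_join_S_set[OF sr] simple_int_max_join_dle[OF tf td sr _ E] dec1 dec2
    unfolding S_def I1_def I2_def by blast
  ultimately have "is_dinf ((\<lambda>s. \<tau> (I1 s) (I2 s)) ` S) (\<tau> (glbD (I1 ` S)) (glbD (I2 ` S)))"
    by (intro is_dinf_tau_directed[OF tf tc]) auto
  moreover have "(\<lambda>s. simple_int \<tau> (msum \<tau> \<gamma>1 \<gamma>2) s E) ` S = (\<lambda>s. \<tau> (I1 s) (I2 s)) ` S"
    using simple_int_msum[OF tf td sr dec1 dec2 E] unfolding S_def S_set_def I1_def I2_def by auto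
  ultimately show ?thesis
    unfolding S_def I1_def I2_def
    using d_integral_eq_glbD[OF tf td sr dec1 E] d_integral_eq_glbD[OF tf td sr dec2 E]
    by (auto intro: d_integrable_if_is_dinf d_integral_eqI)
qed

end
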